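(* Let $\gamma>2$, $\beta_c>0$ and $a=\gamma-1$. For $\mu>0$ define $$R(\mu)=\frac{e^{\beta_c\mu}}{4\sinh^2(a\beta_c\mu/2)}\Big(e^{a\beta_c\mu}F_a(-e^{\beta_c\mu})-2F_a(-1)+e^{-a\beta_c\mu}F_a(-e^{-\beta_c\mu})\Big),$$ where $F_a(w)={}_3F_2(1,a,a;1+a,1+a;w)$. Then $$\lim_{\mu\to\infty}R(\mu)=\left(\frac{\gamma-1}{\gamma-2}\right)^2 .$$ Equivalently, for the Type A model with cut-off $\mu$ at the temperature $T=T_c=1/\beta_c$ (so $\alpha=\gamma-1$), $\dfrac{2L_g}{N(N-1)}\,e^{\beta_c\mu}\to\left(\frac{\gamma-1}{\gamma-2}\right)^2$ as $\mu\to\infty$. *)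

theory Defs
  imports "HOL-Complex_Analysis.Complex_Analysis"
begin

text \<open>Generalized hypergeometric series 3F2(a1,a2,a3; b1,b2; w) as a power series
  (converges for |w| < 1).\<close>
definition hyp3F2_series :: "complex \<Rightarrow> complex \<Rightarrow> complex \<Rightarrow> complex \<Rightarrow> complex \<Rightarrow> complex \<Rightarrow> complex" where
  "hyp3F2_series a1 a2 a3 b1 b2 w =
     (\<Sum>n. pochhammer a1 n * pochhammer a2 n * pochhammer a3 n
            / (pochhammer b1 n * pochhammer b2 n * fact n) * w ^ n)"

text \<open>f is the analytic continuation of F_a(w) = 3F2(1,a,a;1+a,1+a;w) to the cut plane
  C minus [1,oo): holomorphic there and equal to the defining series on the unit disc.\<close>
definition is_F_continuation :: "real \<Rightarrow> (complex \<Rightarrow> complex) \<Rightarrow> bool" where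
  "is_F_continuation a f \<longleftrightarrow>
     f holomorphic_on (- {complex_of_real x | x. x \<ge> 1}) \<and>
     (\<forall>w\<in>ball 0 1. f w = hyp3F2_series 1 (of_real a) (of_real a) (1 + of_real a) (1 + of_real a) w)"

definition R_fun :: "real \<Rightarrow> real \<Rightarrow> (complex \<Rightarrow> complex) \<Rightarrow> real \<Rightarrow> complex" where
  "R_fun a \<beta>c f \<mu> =
     complex_of_real (exp (\<beta>c * \<mu>) / (4 * (sinh (a * \<beta>c * \<mu> / 2))\<^sup>2)) *
     (complex_of_real (exp (a * \<beta>c * \<mu>)) * f (complex_of_real (- exp (\<beta>c * \<mu>)))
      - 2 * f (-1)
      + complex_of_real (exp (- a * \<beta>c * \<mu>)) * f (complex_of_real (- exp (- \<beta>c * \<mu>))))"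

end

theory Submission
  imports Defs "HOL-Real_Asymp.Real_Asymp"
begin

text \<open>
  Integrating the geometric series termwise with \<open>\<integral>\<^sub>0\<^sup>1 x^(n+a-1) ln x dx = -1/(n+a)^2\<close> gives
  \<open>F\<^sub>a(w) = -a^2 \<integral>\<^sub>0\<^sup>1 x^(a-1) ln x / (1 - w x) dx\<close> for \<open>|w| < 1\<close>. The right-hand side is
  holomorphic off \<open>[1,\<infinity>)\<close>, hence it is the analytic continuation of \<open>F\<^sub>a\<close>; on the negative axis it
  is real and bounded, and dominated convergence yields
  \<open>y F\<^sub>a(-y) \<rightarrow> -a^2 \<integral>\<^sub>0\<^sup>1 x^(a-2) ln x dx = a^2/(a-1)^2\<close> as \<open>y \<rightarrow> \<infinity>\<close>, which needs \<open>a > 1\<close>.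
  With \<open>s = \<beta>\<^sub>c \<mu>\<close>, the first summand of \<open>R(\<mu>)\<close> is \<open>e^(as)/(4 sinh^2(as/2)) \<cdot> e^s F\<^sub>a(-e^s)\<close>,
  which tends to \<open>a^2/(a-1)^2\<close>, while the other two carry the factor \<open>e^s / sinh^2(as/2) \<rightarrow> 0\<close>.
\<close>

subsection \<open>Integrals over \<open>[0,1]\<close>\<close>

lemma continuous_on_powr_mult_ln:
  fixes c :: real
  assumes "c > 0"
  shows "continuous_on {0..1} (\<lambda>x. x powr c * ln x)"
proof (rule continuous_on_IccI)
  show "((\<lambda>x. x powr c * ln x) \<longlongrightarrow> 0 powr c * ln 0) (at_right 0)"
    using assms by real_asymp
  show "((\<lambda>x. x powr c * ln x) \<longlongrightarrow> 1 powr c * ln 1) (at_left 1)"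
    by real_asymp
qed (auto intro!: tendsto_intros)

lemma has_integral_powr_mult_ln:
  fixes c :: real
  assumes c: "c > 0"
  shows "((\<lambda>x. x powr (c - 1) * ln x) has_integral - 1 / c\<^sup>2) {0..1}"
proof -
  define G where "G x = x powr c * ln x / c - x powr c / c\<^sup>2" for x :: real
  have "continuous_on {0..1} G"
    unfolding G_def using continuous_on_powr_mult_ln[OF c] c
    by (auto intro!: continuous_intros continuous_on_powr')
  moreover have "(G has_real_derivative x powr (c - 1) * ln x) (at x)" if "x \<in> {0<..<1}" for x
  proof -
    from that have x: "x > 0" by simp
    have "x powr c / x = x powr (c - 1)"
      using x by (simp add: powr_diff)
    then show ?thesis
      unfolding G_def using x c
      by (auto intro!: derivative_eq_intros simp: field_simps power2_eq_square)
  qed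
  ultimately have "((\<lambda>x. x powr (c - 1) * ln x) has_integral G 1 - G 0) {0..1}"
    by (intro fundamental_theorem_of_calculus_interior)
       (auto simp: has_real_derivative_iff_has_vector_derivative)
  then show ?thesis
    by (simp add: G_def)
qed

lemma dominated_convergence_at_top:
  fixes f :: "real \<Rightarrow> 'n::euclidean_space \<Rightarrow> 'm::euclidean_space"
  assumes f: "\<And>y. y \<ge> b \<Longrightarrow> f y integrable_on S" and h: "h integrable_on S"
    and le: "\<And>y x. y \<ge> b \<Longrightarrow> x \<in> S \<Longrightarrow> norm (f y x) \<le> h x"
    and conv: "\<And>x. x \<in> S \<Longrightarrow> ((\<lambda>y. f y x) \<longlongrightarrow> g x) at_top"
  shows "((\<lambda>y. integral S (f y)) \<longlongrightarrow> integral S g) at_top"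
proof (rule tendsto_at_topI_sequentially)
  fix X :: "nat \<Rightarrow> real" assume X: "filterlim X at_top sequentially"
  define Y where "Y n = max (X n) b" for n
  have Y: "filterlim Y at_top sequentially"
    by (rule filterlim_at_top_mono[OF X]) (auto simp: Y_def)
  have "(\<lambda>n. f (Y n) x) \<longlonglongrightarrow> g x" if "x \<in> S" for x
    using filterlim_compose[OF conv[OF that] Y] by (simp add: o_def)
  then have "(\<lambda>n. integral S (f (Y n))) \<longlonglongrightarrow> integral S g"
    using f h le by (intro dominated_convergence(2)) (auto simp: Y_def)
  moreover have "\<forall>\<^sub>F n in sequentially. b \<le> X n"
    using X by (simp add: filterlim_at_top)
  then have "\<forall>\<^sub>F n in sequentially. Y n = X n"
    by eventually_elim (simp add: Y_def)
  ultimately show "(\<lambda>n. integral S (f (X n))) \<longlonglongrightarrow> integral S g"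
    by (auto elim: Lim_transform_eventually simp: eventually_mono)
qed

subsection \<open>Integrals of \<open>\<phi>(x)/(1 - w x)\<close> on the cut plane\<close>

definition cut_plane :: "complex set" where
  "cut_plane = - {complex_of_real x | x. x \<ge> 1}"

lemma one_minus_mult_of_real_nonzero:
  assumes "w \<in> cut_plane" "0 \<le> x" "x \<le> 1"
  shows "1 - w * of_real x \<noteq> 0"
proof
  assume eq: "1 - w * of_real x = 0"
  then have "x > 0"
    using assms(2) by (cases "x = 0") auto
  with eq have "w = of_real (1 / x)" "1 / x \<ge> 1"
    using assms(3) by (auto simp: field_simps)
  with assms(1) show False
    unfolding cut_plane_def by auto
qed

lemma open_cut_plane: "open cut_plane"
proof -
  have "{complex_of_real x | x. x \<ge> 1} = {z. Im z = 0} \<inter> {z. Re z \<ge> 1}"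
    by (auto simp: complex_eq_iff intro!: exI[of _ "Re _"])
  moreover have "closed ({z. Im z = 0} \<inter> {z. Re z \<ge> 1})"
    by (intro closed_Int closed_Collect_eq closed_Collect_le continuous_intros)
  ultimately show ?thesis
    unfolding cut_plane_def by (metis open_Compl)
qed

lemma starlike_cut_plane: "starlike cut_plane"
  unfolding starlike_def
proof (intro bexI ballI subsetI)
  show "0 \<in> cut_plane"
    unfolding cut_plane_def by auto
  fix w z assume w: "w \<in> cut_plane" and "z \<in> closed_segment 0 w"
  then obtain u :: real where u: "0 \<le> u" "u \<le> 1" "z = u *\<^sub>R w"
    by (auto simp: closed_segment_def)
  show "z \<in> cut_plane"
  proof (rule ccontr)
    assume "z \<notin> cut_plane"
    then obtain x where x: "x \<ge> 1" "z = of_real x"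
      unfolding cut_plane_def by auto
    with u have "u > 0"
      by (cases "u = 0") auto
    with u x have "w = of_real (x / u)" "x / u \<ge> 1"
      by (auto simp: scaleR_conv_of_real field_simps)
    with w show False
      unfolding cut_plane_def by auto
  qed
qed

lemma ball_subset_cut_plane: "ball 0 1 \<subseteq> cut_plane"
  unfolding cut_plane_def by auto

lemma holomorphic_on_integral_div_one_minus:
  fixes \<phi> :: "real \<Rightarrow> complex"
  assumes \<phi>: "continuous_on {0..1} \<phi>"
  shows "(\<lambda>w. integral {0..1} (\<lambda>x. \<phi> x / (1 - w * of_real x))) holomorphic_on cut_plane"
proof (rule analytic_imp_holomorphic, unfold analytic_on_def, intro ballI)
  fix w0 assume "w0 \<in> cut_plane"
  then obtain r where r: "r > 0" "ball w0 r \<subseteq> cut_plane"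
    using open_cut_plane open_contains_ball by blast
  then have nz: "1 - w * of_real x \<noteq> 0" if "w \<in> ball w0 r" "x \<in> cbox 0 1" for w x
    using one_minus_mult_of_real_nonzero that by auto
  have "(\<lambda>w. integral (cbox 0 1) (\<lambda>x. \<phi> x / (1 - w * of_real x))) holomorphic_on ball w0 r"
  proof (rule leibniz_rule_holomorphic[where fx = "\<lambda>w x. \<phi> x * of_real x / (1 - w * of_real x)\<^sup>2"])
    fix w x assume "w \<in> ball w0 r" "x \<in> cbox (0::real) 1"
    with nz show "((\<lambda>w. \<phi> x / (1 - w * of_real x)) has_field_derivative
        \<phi> x * of_real x / (1 - w * of_real x)\<^sup>2) (at w within ball w0 r)"
      by (auto intro!: derivative_eq_intros simp: field_simps power2_eq_square)
  next
    fix w assume "w \<in> ball w0 r"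
    with nz \<phi> show "(\<lambda>x. \<phi> x / (1 - w * of_real x)) integrable_on cbox 0 1"
      by (intro integrable_continuous) (auto intro!: continuous_intros)
  next
    have "continuous_on (ball w0 r \<times> cbox 0 1) (\<phi> \<circ> snd)"
      using \<phi> by (intro continuous_on_compose continuous_intros) auto
    with nz show "continuous_on (ball w0 r \<times> cbox 0 1)
        (\<lambda>(w, x). \<phi> x * of_real x / (1 - w * of_real x)\<^sup>2)"
      by (auto simp: case_prod_beta o_def intro!: continuous_intros)
  qed (rule convex_ball)
  with r show "\<exists>e>0. (\<lambda>w. integral {0..1} (\<lambda>x. \<phi> x / (1 - w * of_real x))) holomorphic_on ball w0 e"
    by auto
qed

lemma integral_div_one_minus_sums:
  fixes \<phi> :: "real \<Rightarrow> complex"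
  assumes \<phi>: "continuous_on {0..1} \<phi>" and w: "norm w < 1"
  shows "(\<lambda>n. w ^ n * integral {0..1} (\<lambda>x. of_real x ^ n * \<phi> x))
           sums integral {0..1} (\<lambda>x. \<phi> x / (1 - w * of_real x))"
proof -
  define S where "S N x = \<phi> x * (\<Sum>n<N. (w * of_real x) ^ n)" for N x
  have S_cont: "continuous_on {0..1} (S N)" for N
    unfolding S_def using \<phi> by (auto intro!: continuous_intros)
  have "(\<lambda>N. integral {0..1} (S N)) \<longlonglongrightarrow> integral {0..1} (\<lambda>x. \<phi> x / (1 - w * of_real x))"
  proof (rule dominated_convergence(2))
    show "S N integrable_on {0..1}" for N
      using S_cont by (rule integrable_continuous_interval)
    show "(\<lambda>x. norm (\<phi> x) / (1 - norm w)) integrable_on {0..1}"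
      using \<phi> w by (intro integrable_continuous_interval) (auto intro!: continuous_intros)
  next
    fix N and x :: real assume x: "x \<in> {0..1}"
    have "norm (\<Sum>n<N. (w * of_real x) ^ n) \<le> (\<Sum>n<N. norm w ^ n)"
      using x by (intro sum_norm_le)
        (auto simp: norm_mult norm_power power_mult_distrib intro!: mult_left_le power_le_one)
    also have "\<dots> \<le> 1 / (1 - norm w)"
      using w by (simp add: sum_gp_strict divide_right_mono)
    finally show "norm (S N x) \<le> norm (\<phi> x) / (1 - norm w)"
      unfolding S_def norm_mult by (auto intro: mult_left_mono simp: divide_inverse)
  next
    fix x :: real assume x: "x \<in> {0..1}"
    have "norm (w * of_real x) < 1"
      using x w by (auto simp: norm_mult intro: le_less_trans[OF mult_left_le])
    then have "(\<lambda>N. \<Sum>n<N. (w * of_real x) ^ n) \<longlonglongrightarrow> 1 / (1 - w * of_real x)"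
      using geometric_sums sums_def by blast
    then show "(\<lambda>N. S N x) \<longlonglongrightarrow> \<phi> x / (1 - w * of_real x)"
      unfolding S_def by (auto intro: tendsto_eq_intros)
  qed
  moreover have "integral {0..1} (S N) = (\<Sum>n<N. w ^ n * integral {0..1} (\<lambda>x. of_real x ^ n * \<phi> x))" for N
    unfolding S_def integral_mult_right[symmetric] using \<phi>
    by (subst integral_sum[symmetric])
       (auto simp: sum_distrib_left power_mult_distrib algebra_simps
             intro!: integrable_continuous_interval continuous_intros)
  ultimately show ?thesis
    by (simp add: sums_def)
qed

subsection \<open>The integral representation of \<open>F\<^sub>a\<close>\<close>

definition log_weight :: "real \<Rightarrow> real \<Rightarrow> real" where
  "log_weight a x = x powr (a - 1) * ln x"

definition F_integral :: "real \<Rightarrow> complex \<Rightarrow> complex" where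
  "F_integral a w =
     - of_real (a\<^sup>2) * integral {0..1} (\<lambda>x. of_real (log_weight a x) / (1 - w * of_real x))"

lemma continuous_on_log_weight: "a > 1 \<Longrightarrow> continuous_on {0..1} (log_weight a)"
  unfolding log_weight_def by (rule continuous_on_powr_mult_ln) simp

lemma log_weight_nonpos: "0 \<le> x \<Longrightarrow> x \<le> 1 \<Longrightarrow> log_weight a x \<le> 0"
  unfolding log_weight_def by (cases "x = 0") (auto intro: mult_nonneg_nonpos)

lemma has_integral_power_mult_log_weight:
  assumes "a > 0"
  shows "((\<lambda>x. x ^ n * log_weight a x) has_integral - 1 / (real n + a)\<^sup>2) {0..1}"
proof -
  have "x ^ n * log_weight a x = x powr ((real n + a) - 1) * ln x" if "x \<in> {0..1}" for x
  proof (cases "x = 0")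
    case False
    with that have "x powr ((real n + a) - 1) = x ^ n * x powr (a - 1)"
      by (simp add: powr_realpow[symmetric] powr_add[symmetric] algebra_simps)
    then show ?thesis
      by (simp add: log_weight_def)
  qed (simp add: log_weight_def)
  with has_integral_powr_mult_ln[of "real n + a"] assms show ?thesis
    by (auto intro: has_integral_eq)
qed

lemma pochhammer_one_plus_of_real_nonzero:
  fixes a :: real
  assumes "a > 0"
  shows "pochhammer (1 + complex_of_real a) n \<noteq> 0"
proof
  assume "pochhammer (1 + complex_of_real a) n = 0"
  then obtain k where "1 + complex_of_real a = - of_nat k"
    by (auto simp: pochhammer_eq_0_iff)
  then have "1 + a = - real k"
    by (metis of_real_1 of_real_add of_real_eq_iff of_real_minus of_real_of_nat_eq)
  with assms show False
    by simp
qed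

lemma pochhammer_div_pochhammer_plus_one:
  fixes a :: real
  assumes "a > 0"
  shows "pochhammer (of_real a) n / pochhammer (1 + of_real a) n = complex_of_real (a / (a + n))"
proof -
  have "complex_of_real a + of_nat n \<noteq> 0"
    using assms by (auto simp: complex_eq_iff)
  moreover have "pochhammer (complex_of_real a) n * (of_real a + of_nat n) =
      of_real a * pochhammer (1 + of_real a) n"
    using pochhammer_Suc[of "complex_of_real a" n] pochhammer_rec[of "complex_of_real a" n]
    by (simp add: add.commute)
  ultimately show ?thesis
    using pochhammer_one_plus_of_real_nonzero[OF assms] by (simp add: field_simps)
qed

lemma hyp3F2_coefficient:
  fixes a :: real
  assumes "a > 0"
  shows "pochhammer 1 n * pochhammer (of_real a) n * pochhammer (of_real a) n
           / (pochhammer (1 + of_real a) n * pochhammer (1 + of_real a) n * fact n)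
         = complex_of_real (a\<^sup>2 / (real n + a)\<^sup>2)"
proof -
  have "pochhammer 1 n * pochhammer (of_real a) n * pochhammer (of_real a) n
          / (pochhammer (1 + of_real a) n * pochhammer (1 + of_real a) n * fact n)
        = (pochhammer (complex_of_real a) n / pochhammer (1 + of_real a) n)\<^sup>2"
    using pochhammer_one_plus_of_real_nonzero[OF assms]
    by (simp add: pochhammer_fact[symmetric] power2_eq_square)
  then show ?thesis
    using assms by (simp add: pochhammer_div_pochhammer_plus_one power_divide add.commute)
qed

lemma F_integral_eq_hyp3F2:
  assumes a: "a > 1" and w: "w \<in> ball 0 1"
  shows "F_integral a w = hyp3F2_series 1 (of_real a) (of_real a) (1 + of_real a) (1 + of_real a) w"
proof -
  have "a > 0"
    using a by simp
  have moment: "integral {0..1} (\<lambda>x. of_real x ^ n * of_real (log_weight a x)) =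
      complex_of_real (- 1 / (real n + a)\<^sup>2)" for n
    using has_integral_of_real[OF has_integral_power_mult_log_weight[OF \<open>a > 0\<close>]]
    unfolding of_real_mult of_real_power by (rule integral_unique)
  have "(\<lambda>n. w ^ n * of_real (- 1 / (real n + a)\<^sup>2)) sums
      integral {0..1} (\<lambda>x. of_real (log_weight a x) / (1 - w * of_real x))"
    using integral_div_one_minus_sums[of "\<lambda>x. of_real (log_weight a x)" w]
      continuous_on_log_weight[OF a] w
    by (simp add: moment continuous_on_of_real)
  from sums_mult[OF this, of "- of_real (a\<^sup>2)"]
  have "(\<lambda>n. of_real (a\<^sup>2 / (real n + a)\<^sup>2) * w ^ n) sums F_integral a w"
    unfolding F_integral_def by (simp add: algebra_simps)
  then show ?thesis
    unfolding hyp3F2_series_def using a by (simp add: hyp3F2_coefficient sums_unique)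
qed

lemma is_F_continuation_F_integral:
  assumes "a > 1"
  shows "is_F_continuation a (F_integral a)"
proof -
  have "F_integral a holomorphic_on cut_plane"
    unfolding F_integral_def
    using holomorphic_on_integral_div_one_minus[of "\<lambda>x. of_real (log_weight a x)"]
      continuous_on_log_weight[OF assms]
    by (auto intro!: holomorphic_intros simp: continuous_on_of_real)
  then show ?thesis
    unfolding is_F_continuation_def cut_plane_def[symmetric]
    using F_integral_eq_hyp3F2[OF assms] by auto
qed

lemma is_F_continuation_imp_eq_F_integral:
  assumes a: "a > 1" and f: "is_F_continuation a f" and w: "w \<in> cut_plane"
  shows "f w = F_integral a w"
proof -
  have "f w - F_integral a w = 0"
  proof (rule analytic_continuation[of "\<lambda>z. f z - F_integral a z" cut_plane "ball 0 1" 0])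
    show "(\<lambda>z. f z - F_integral a z) holomorphic_on cut_plane"
      using f is_F_continuation_F_integral[OF a]
      unfolding is_F_continuation_def cut_plane_def[symmetric] by (auto intro!: holomorphic_intros)
    show "\<And>z. z \<in> ball 0 1 \<Longrightarrow> f z - F_integral a z = 0"
      using f F_integral_eq_hyp3F2[OF a] unfolding is_F_continuation_def by auto
  qed (use open_cut_plane starlike_cut_plane starlike_imp_connected ball_subset_cut_plane w
       in \<open>auto simp: islimpt_ball\<close>)
  then show ?thesis
    by simp
qed

subsection \<open>\<open>F\<^sub>a\<close> on the negative real axis\<close>

definition F_neg :: "real \<Rightarrow> real \<Rightarrow> real" where
  "F_neg a y = - a\<^sup>2 * integral {0..1} (\<lambda>x. log_weight a x / (1 + y * x))"

lemma continuous_on_log_weight_div: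
  assumes "a > 1" "y \<ge> 0"
  shows "continuous_on {0..1} (\<lambda>x. log_weight a x / (1 + y * x))"
  using assms continuous_on_log_weight[OF assms(1)]
  by (intro continuous_intros) (auto simp: add_nonneg_eq_0_iff)

lemma F_integral_of_real_neg:
  assumes "a > 1" "y \<ge> 0"
  shows "F_integral a (of_real (- y)) = of_real (F_neg a y)"
proof -
  have "((\<lambda>x. of_real (log_weight a x / (1 + y * x))) has_integral
      complex_of_real (integral {0..1} (\<lambda>x. log_weight a x / (1 + y * x)))) {0..1}"
    using continuous_on_log_weight_div[OF assms]
    by (intro has_integral_of_real integrable_integral integrable_continuous_interval)
  then show ?thesis
    unfolding F_integral_def F_neg_def by (simp add: integral_unique)
qed

lemma abs_F_neg_le_1:
  assumes a: "a > 1" and y: "y \<ge> 0"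
  shows "\<bar>F_neg a y\<bar> \<le> 1"
proof -
  have total: "((\<lambda>x. - log_weight a x) has_integral 1 / a\<^sup>2) {0..1}"
    using has_integral_neg[OF has_integral_power_mult_log_weight[of a 0]] a by simp
  have "norm (integral {0..1} (\<lambda>x. log_weight a x / (1 + y * x))) \<le> integral {0..1} (\<lambda>x. - log_weight a x)"
  proof (rule integral_norm_bound_integral)
    show "(\<lambda>x. log_weight a x / (1 + y * x)) integrable_on {0..1}"
      using continuous_on_log_weight_div[OF a y] by (rule integrable_continuous_interval)
    show "(\<lambda>x. - log_weight a x) integrable_on {0..1}"
      using total by blast
    fix x :: real assume "x \<in> {0..1}"
    with y have "1 \<le> 1 + y * x"
      by simp
    then have "\<bar>log_weight a x\<bar> / (1 + y * x) \<le> \<bar>log_weight a x\<bar> / 1"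
      by (intro frac_le) auto
    with \<open>x \<in> {0..1}\<close> log_weight_nonpos[of x a] \<open>1 \<le> 1 + y * x\<close>
    show "norm (log_weight a x / (1 + y * x)) \<le> - log_weight a x"
      by (simp add: abs_divide)
  qed
  also have "\<dots> = 1 / a\<^sup>2"
    using total by (rule integral_unique)
  finally have "a\<^sup>2 * \<bar>integral {0..1} (\<lambda>x. log_weight a x / (1 + y * x))\<bar> \<le> 1"
    using a by (simp add: le_divide_eq mult.commute)
  then show ?thesis
    unfolding F_neg_def by (simp add: abs_mult)
qed

lemma has_integral_log_weight_div:
  assumes "a > 1"
  shows "((\<lambda>x. log_weight a x / x) has_integral - 1 / (a - 1)\<^sup>2) {0..1}"
proof -
  have "log_weight a x / x = x powr ((a - 1) - 1) * ln x" if "x \<in> {0..1}" for x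
    using that by (cases "x = 0") (auto simp: log_weight_def powr_diff power2_eq_square)
  with has_integral_powr_mult_ln[of "a - 1"] assms show ?thesis
    by (auto intro: has_integral_eq)
qed

lemma abs_log_weight_mult_le:
  assumes x: "x \<in> {0..1}" and y: "y \<ge> 0"
  shows "\<bar>log_weight a x * (y / (1 + y * x))\<bar> \<le> - (log_weight a x / x)"
proof (cases "x = 0")
  case False
  with x have "x > 0"
    by simp
  moreover have "1 + y * x > 0"
    using \<open>x > 0\<close> y by (intro add_pos_nonneg) auto
  ultimately have le: "y / (1 + y * x) \<le> 1 / x" and nonneg: "0 \<le> y / (1 + y * x)"
    using y by (simp_all add: field_simps)
  have "\<bar>log_weight a x * (y / (1 + y * x))\<bar> = \<bar>log_weight a x\<bar> * (y / (1 + y * x))"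
    unfolding abs_mult abs_of_nonneg[OF nonneg] ..
  also have "\<dots> \<le> \<bar>log_weight a x\<bar> * (1 / x)"
    using le by (rule mult_left_mono) simp
  also have "\<dots> = - (log_weight a x / x)"
    using x log_weight_nonpos[of x a] by simp
  finally show ?thesis .
qed (simp add: log_weight_def)

lemma tendsto_mult_F_neg:
  assumes a: "a > 1"
  shows "((\<lambda>y. y * F_neg a y) \<longlongrightarrow> a\<^sup>2 / (a - 1)\<^sup>2) at_top"
proof -
  note lim_int = has_integral_log_weight_div[OF a]
  have "((\<lambda>y. integral {0..1} (\<lambda>x. log_weight a x * (y / (1 + y * x)))) \<longlongrightarrow>
      integral {0..1} (\<lambda>x. log_weight a x / x)) at_top"
  proof (rule dominated_convergence_at_top[where b = 0 and h = "\<lambda>x. - (log_weight a x / x)"])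
    fix y :: real assume "y \<ge> 0"
    then show "(\<lambda>x. log_weight a x * (y / (1 + y * x))) integrable_on {0..1}"
      using continuous_on_log_weight[OF a]
      by (intro integrable_continuous_interval continuous_intros) (auto simp: add_nonneg_eq_0_iff)
    fix x :: real assume "x \<in> {0..1}"
    from this \<open>y \<ge> 0\<close> show "norm (log_weight a x * (y / (1 + y * x))) \<le> - (log_weight a x / x)"
      unfolding real_norm_def by (rule abs_log_weight_mult_le)
  next
    show "(\<lambda>x. - (log_weight a x / x)) integrable_on {0..1}"
      using has_integral_neg[OF lim_int] by blast
    fix x :: real assume "x \<in> {0..1}"
    show "((\<lambda>y. log_weight a x * (y / (1 + y * x))) \<longlongrightarrow> log_weight a x / x) at_top"
    proof (cases "x = 0")
      case False
      with \<open>x \<in> {0..1}\<close> have "((\<lambda>y. y / (1 + y * x)) \<longlongrightarrow> 1 / x) at_top"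
        by real_asymp (simp add: divide_inverse)
      from tendsto_mult_left[OF this, of "log_weight a x"] show ?thesis
        by simp
    qed (simp add: log_weight_def)
  qed
  from tendsto_mult_left[OF this, of "- a\<^sup>2"]
  have "((\<lambda>y. - a\<^sup>2 * integral {0..1} (\<lambda>x. log_weight a x * (y / (1 + y * x)))) \<longlongrightarrow>
      a\<^sup>2 / (a - 1)\<^sup>2) at_top"
    by (simp add: integral_unique[OF lim_int])
  moreover have "- a\<^sup>2 * integral {0..1} (\<lambda>x. log_weight a x * (y / (1 + y * x))) = y * F_neg a y" for y
    unfolding F_neg_def integral_mult_right[symmetric] by (simp add: algebra_simps)
  ultimately show ?thesis
    by simp
qed

subsection \<open>The limit of \<open>R\<close>\<close>

definition R_real :: "real \<Rightarrow> real \<Rightarrow> real" where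
  "R_real a s = exp s / (4 * (sinh (a * s / 2))\<^sup>2) *
     (exp (a * s) * F_neg a (exp s) - 2 * F_neg a 1 + exp (- a * s) * F_neg a (exp (- s)))"

lemma tendsto_R_real:
  assumes a: "a > 1"
  shows "(R_real a \<longlongrightarrow> a\<^sup>2 / (a - 1)\<^sup>2) at_top"
proof -
  define D where "D s = 4 * (sinh (a * s / 2))\<^sup>2" for s
  have R_eq: "R_real a s = exp (a * s) / D s * (exp s * F_neg a (exp s)) - 2 * F_neg a 1 * (exp s / D s)
      + exp s * exp (- a * s) / D s * F_neg a (exp (- s))" for s
    unfolding R_real_def D_def divide_inverse by (simp only: ring_distribs mult_ac)
  have "((\<lambda>s. exp (a * s) / D s) \<longlongrightarrow> 1) at_top"
    unfolding D_def using a by (real_asymp simp: sinh_def) (simp add: power2_eq_square)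
  moreover have "((\<lambda>s. exp s * F_neg a (exp s)) \<longlongrightarrow> a\<^sup>2 / (a - 1)\<^sup>2) at_top"
    using filterlim_compose[OF tendsto_mult_F_neg[OF a] exp_at_top] by (simp add: o_def)
  moreover have "((\<lambda>s. exp s / D s) \<longlongrightarrow> 0) at_top"
    unfolding D_def using a by (real_asymp simp: sinh_def)
  moreover have "((\<lambda>s. exp s * exp (- a * s) / D s * F_neg a (exp (- s))) \<longlongrightarrow> 0) at_top"
  proof (rule lim_null_mult_right_bounded)
    show "((\<lambda>s. exp s * exp (- a * s) / D s) \<longlongrightarrow> 0) at_top"
      unfolding D_def using a by (real_asymp simp: sinh_def)
    show "\<forall>\<^sub>F s in at_top. norm (F_neg a (exp (- s))) \<le> 1"
      using abs_F_neg_le_1[OF a] by simp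
  qed
  ultimately have "((\<lambda>s. exp (a * s) / D s * (exp s * F_neg a (exp s)) - 2 * F_neg a 1 * (exp s / D s)
      + exp s * exp (- a * s) / D s * F_neg a (exp (- s))) \<longlongrightarrow> 1 * (a\<^sup>2 / (a - 1)\<^sup>2) - 2 * F_neg a 1 * 0 + 0) at_top"
    by (intro tendsto_intros)
  then show ?thesis
    unfolding R_eq[symmetric] by simp
qed

lemma R_fun_eq_R_real:
  assumes a: "a > 1" and f: "is_F_continuation a f"
  shows "R_fun a \<beta>c f = (\<lambda>\<mu>. of_real (R_real a (\<beta>c * \<mu>)))"
proof -
  have f_neg: "f (of_real (- y)) = of_real (F_neg a y)" if "y \<ge> 0" for y
    using is_F_continuation_imp_eq_F_integral[OF a f] F_integral_of_real_neg[OF a that] that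
    by (simp add: cut_plane_def)
  then have f_neg_exp: "f (of_real (- exp s)) = of_real (F_neg a (exp s))" for s
    by simp
  from f_neg[of 1] have "f (-1) = of_real (F_neg a 1)"
    by simp
  then show ?thesis
    unfolding R_fun_def R_real_def f_neg_exp
    by (simp only: mult.assoc minus_mult_left of_real_mult of_real_diff of_real_add of_real_numeral)
qed

theorem mainTheorem6:
  fixes \<gamma> \<beta>c a :: real
  assumes "\<gamma> > 2" and "\<beta>c > 0" and "a = \<gamma> - 1"
  shows "(\<exists>f. is_F_continuation a f) \<and>
         (\<forall>f. is_F_continuation a f \<longrightarrow>
            (R_fun a \<beta>c f \<longlongrightarrow> complex_of_real (((\<gamma> - 1) / (\<gamma> - 2))\<^sup>2)) at_top)"
proof (intro conjI allI impI)
  have a: "a > 1"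
    using assms by simp
  then show "\<exists>f. is_F_continuation a f"
    using is_F_continuation_F_integral by blast
  fix f assume "is_F_continuation a f"
  have "filterlim (\<lambda>\<mu>. \<beta>c * \<mu>) at_top at_top"
    using \<open>\<beta>c > 0\<close> by real_asymp
  from filterlim_compose[OF tendsto_R_real[OF a] this]
  have "((\<lambda>\<mu>. of_real (R_real a (\<beta>c * \<mu>))) \<longlongrightarrow> complex_of_real (a\<^sup>2 / (a - 1)\<^sup>2)) at_top"
    by (rule tendsto_of_real)
  moreover have "a\<^sup>2 / (a - 1)\<^sup>2 = ((\<gamma> - 1) / (\<gamma> - 2))\<^sup>2"
    using assms by (simp add: power_divide)
  ultimately show "(R_fun a \<beta>c f \<longlongrightarrow> complex_of_real (((\<gamma> - 1) / (\<gamma> - 2))\<^sup>2)) at_top"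
    using R_fun_eq_R_real[OF a \<open>is_F_continuation a f\<close>] by simp
qed

end
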